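(* Consider a finite set of flows $\mathcal K$, each flow $k$ with rate $r_k>0$ associated to a beam $v_k\in V$; let $n_v=|\{k:v_k=v\}|$ and assume $n_v\ge1$ for all $v\in V$. The problem $$\text{maximize } \sum_{k\in\mathcal K}\ln(r_k\gamma_{v_k}\delta_k)\quad\text{subject to } \gamma\in\mathrm{conv}(\mathcal Z),\ \delta\in\Delta$$ has the unique optimal solution $\delta^\star_k=1/n_{v_k}$ and $\gamma^\star_v=\kappa^\star_v\prod_{v'\in\mathcal A(v)}(1-\kappa^\star_{v'})$ with $\kappa^\star_v=n_v/\sum_{v'\in\bar{\mathcal D}(v)}n_{v'}$, i.e. $$\gamma^\star_v=\frac{n_v}{\sum_{v'\in\bar{\mathcal D}(v)}n_{v'}}\prod_{v''\in\mathcal A(v)}\frac{\sum_{v'\in\mathcal D(v'')}n_{v'}}{\sum_{v'\in\bar{\mathcal D}(v'')}n_{v'}}.$$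
   Context: $G=(V,E)$ is a finite directed rooted tree with vertex set $V=\{1,\dots,|V|\}$ and root $1$, edges oriented from parent to child. For $v\in V$: $\mathcal A(v)$ is the set of strict ancestors of $v$, $\bar{\mathcal A}(v)=\mathcal A(v)\cup\{v\}$, $\mathcal D(v)$ is the set of strict descendants of $v$, $\bar{\mathcal D}(v)=\mathcal D(v)\cup\{v\}$, and $d(v)$ is the number of children of $v$. $\mathcal Z=\{z\in\{0,1\}^{V}: z_v z_{v'}=0 \text{ for all } v\in V,\ v'\in\mathcal A(v)\}$ and $\mathrm{conv}(\mathcal Z)$ is its convex hull. $\Delta=\{\delta\in[0,1]^{\mathcal K}: \sum_{k: v_k=v}\delta_k=1\ \forall v\in V\}$. *)

theory Defs
  imports "HOL-Analysis.Analysis"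
begin

(* Vertex set V = {1..N}; edges E oriented parent -> child; root 1. *)
definition vset :: "nat \<Rightarrow> nat set" where
  "vset N = {1..N}"

definition rooted_tree :: "nat \<Rightarrow> (nat \<times> nat) set \<Rightarrow> bool" where
  "rooted_tree N E \<longleftrightarrow> N \<ge> 1 \<and> E \<subseteq> vset N \<times> vset N
     \<and> (\<forall>v\<in>vset N. (1, v) \<in> E\<^sup>*)
     \<and> (\<forall>v\<in>vset N. v \<noteq> 1 \<longrightarrow> (\<exists>!u. (u, v) \<in> E))
     \<and> (\<forall>u. (u, 1) \<notin> E)"

definition anc :: "(nat \<times> nat) set \<Rightarrow> nat \<Rightarrow> nat set" where
  "anc E v = {u. (u, v) \<in> E\<^sup>+}"

definition desc :: "(nat \<times> nat) set \<Rightarrow> nat \<Rightarrow> nat set" where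
  "desc E v = {u. (v, u) \<in> E\<^sup>+}"

definition Zset :: "nat \<Rightarrow> (nat \<times> nat) set \<Rightarrow> (nat \<Rightarrow> real) set" where
  "Zset N E = {z. (\<forall>v\<in>vset N. z v = 0 \<or> z v = 1) \<and> (\<forall>v. v \<notin> vset N \<longrightarrow> z v = 0)
                 \<and> (\<forall>v\<in>vset N. \<forall>v'\<in>anc E v. z v * z v' = 0)}"

definition conv_fin :: "(nat \<Rightarrow> real) set \<Rightarrow> (nat \<Rightarrow> real) set" where
  "conv_fin S = {x. \<exists>c. (\<forall>z\<in>S. 0 \<le> c z) \<and> sum c S = 1 \<and> x = (\<lambda>v. \<Sum>z\<in>S. c z * z v)}"

definition Delta :: "nat \<Rightarrow> 'k set \<Rightarrow> ('k \<Rightarrow> nat) \<Rightarrow> ('k \<Rightarrow> real) set" where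
  "Delta N K beam = {\<delta>. (\<forall>k\<in>K. 0 \<le> \<delta> k \<and> \<delta> k \<le> 1) \<and> (\<forall>k. k \<notin> K \<longrightarrow> \<delta> k = 0)
                  \<and> (\<forall>v\<in>vset N. (\<Sum>k\<in>{k\<in>K. beam k = v}. \<delta> k) = 1)}"

definition nflows :: "'k set \<Rightarrow> ('k \<Rightarrow> nat) \<Rightarrow> nat \<Rightarrow> nat" where
  "nflows K beam v = card {k\<in>K. beam k = v}"

(* objective with the extended-value convention ln 0 = -infinity *)
definition objective :: "'k set \<Rightarrow> ('k \<Rightarrow> nat) \<Rightarrow> ('k \<Rightarrow> real) \<Rightarrow> (nat \<Rightarrow> real) \<Rightarrow> ('k \<Rightarrow> real) \<Rightarrow> ereal" where
  "objective K beam r \<gamma> \<delta> =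
     (if (\<forall>k\<in>K. r k * \<gamma> (beam k) * \<delta> k > 0)
      then ereal (\<Sum>k\<in>K. ln (r k * \<gamma> (beam k) * \<delta> k)) else -\<infinity>)"

definition kappa_star :: "(nat \<times> nat) set \<Rightarrow> 'k set \<Rightarrow> ('k \<Rightarrow> nat) \<Rightarrow> nat \<Rightarrow> real" where
  "kappa_star E K beam v = real (nflows K beam v) / (\<Sum>v'\<in>insert v (desc E v). real (nflows K beam v'))"

definition gamma_star :: "nat \<Rightarrow> (nat \<times> nat) set \<Rightarrow> 'k set \<Rightarrow> ('k \<Rightarrow> nat) \<Rightarrow> nat \<Rightarrow> real" where
  "gamma_star N E K beam v = (if v \<in> vset N
     then kappa_star E K beam v * (\<Prod>v'\<in>anc E v. 1 - kappa_star E K beam v') else 0)"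

definition delta_star :: "'k set \<Rightarrow> ('k \<Rightarrow> nat) \<Rightarrow> 'k \<Rightarrow> real" where
  "delta_star K beam k = (if k \<in> K then 1 / real (nflows K beam (beam k)) else 0)"

end

theory Submission
  imports Defs
begin

(* Select every vertex v independently with probability kappa v = n_v / S_v, where S_v is the
   number of flows in the subtree of v, and keep the topmost selected vertices: this random element
   of Z has mean gamma_opt, so gamma_opt lies in conv Z.
   For optimality, ln x <= x - 1 bounds the objective at (gamma, delta) by its value at
   (gamma_opt, delta_star) plus the linear terms sum_v n_v (gamma_v / gamma_opt_v - 1) and
   sum_k (delta_k / delta_star_k - 1), strictly off the optimum. The delta term vanishes on Delta.
   The gamma term is linear, so it suffices to bound it on Z: n_v / gamma_opt_v = S_v / pi_v with
   pi_v the product of 1 - kappa over the ancestors of v, and along an antichain these ratios sum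
   to at most S_1 / pi_1 = sum_v n_v, since at each vertex u the subtree sizes of the children add
   up to (1 - kappa u) S_u while pi shrinks by the same factor. *)

lemma finite_vset: "finite (vset N)"
  unfolding vset_def by simp

lemma finite_Zset: "finite (Zset N E)"
proof -
  have "Zset N E \<subseteq> (\<lambda>C v. if v \<in> C then 1 else 0) ` Pow (vset N)"
  proof
    fix z assume z: "z \<in> Zset N E"
    have "z = (\<lambda>v. if v \<in> {v \<in> vset N. z v = 1} then 1 else 0)"
      using z unfolding Zset_def by force
    then show "z \<in> (\<lambda>C v. if v \<in> C then 1 else 0) ` Pow (vset N)" by blast
  qed
  then show ?thesis using finite_vset finite_subset by blast
qed

lemma Zset_nonneg: "z \<in> Zset N E \<Longrightarrow> 0 \<le> z v"
  unfolding Zset_def by (cases "v \<in> vset N") force+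

lemma Zset_outside: "z \<in> Zset N E \<Longrightarrow> v \<notin> vset N \<Longrightarrow> z v = 0"
  unfolding Zset_def by blast

lemma conv_fin_nonneg:
  assumes "x \<in> conv_fin S" "\<And>z. z \<in> S \<Longrightarrow> 0 \<le> z v"
  shows "0 \<le> x v"
  using assms unfolding conv_fin_def by (auto intro!: sum_nonneg)

lemma conv_fin_eq_0:
  assumes "x \<in> conv_fin S" "\<And>z. z \<in> S \<Longrightarrow> z v = 0"
  shows "x v = 0"
  using assms unfolding conv_fin_def by (auto intro!: sum.neutral)

lemma conv_fin_sum_le:
  assumes x: "x \<in> conv_fin S" and bound: "\<And>z. z \<in> S \<Longrightarrow> (\<Sum>v\<in>A. z v * a v) \<le> b"
  shows "(\<Sum>v\<in>A. x v * a v) \<le> b"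
proof -
  obtain c where c: "\<forall>z\<in>S. 0 \<le> c z" "sum c S = 1" "x = (\<lambda>v. \<Sum>z\<in>S. c z * z v)"
    using x unfolding conv_fin_def by blast
  have "(\<Sum>v\<in>A. x v * a v) = (\<Sum>z\<in>S. c z * (\<Sum>v\<in>A. z v * a v))"
    unfolding c(3) by (simp add: sum_distrib_left sum_distrib_right sum.swap[of _ A] mult.assoc)
  also have "\<dots> \<le> (\<Sum>z\<in>S. c z * b)"
    using bound c(1) by (intro sum_mono mult_left_mono) auto
  also have "\<dots> = b"
    using c(2) by (simp add: sum_distrib_right[symmetric])
  finally show ?thesis .
qed

lemma mixture_in_conv_fin:
  assumes "finite I" "finite S" "g ` I \<subseteq> S" "\<forall>i\<in>I. 0 \<le> p i" "sum p I = 1"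
  shows "(\<lambda>v. \<Sum>i\<in>I. p i * g i v) \<in> conv_fin S"
proof -
  define c where "c z = (\<Sum>i\<in>{i \<in> I. g i = z}. p i)" for z
  have "sum c S = sum p I"
    unfolding c_def using sum.group[OF assms(1-3)] by simp
  moreover have "(\<Sum>z\<in>S. c z * z v) = (\<Sum>i\<in>I. p i * g i v)" for v
  proof -
    have "(\<Sum>z\<in>S. c z * z v) = (\<Sum>z\<in>S. \<Sum>i\<in>{i \<in> I. g i = z}. p i * g i v)"
      unfolding c_def sum_distrib_right by (intro sum.cong) auto
    also have "\<dots> = (\<Sum>i\<in>I. p i * g i v)"
      by (rule sum.group[OF assms(1-3)])
    finally show ?thesis .
  qed
  moreover have "\<forall>z\<in>S. 0 \<le> c z"
    unfolding c_def using assms(4) by (auto intro!: sum_nonneg)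
  ultimately show ?thesis
    unfolding conv_fin_def using assms(5) by auto
qed

lemma ln_less_ln_plus_ratio:
  fixes a b :: real
  assumes "0 < a" "0 < b" "b \<noteq> a"
  shows "ln b < ln a + (b / a - 1)"
proof -
  have "b / a \<noteq> 1" "0 < b / a"
    using assms by auto
  then have "ln (b / a) < b / a - 1"
    using ln_le_minus_one ln_eq_minus_one by fastforce
  then show ?thesis using assms by (simp add: ln_div)
qed

lemma weighted_sum_ln_less:
  fixes a b c :: "'i \<Rightarrow> real"
  assumes "finite I" "\<forall>i\<in>I. 0 \<le> c i \<and> 0 < a i \<and> 0 < b i" "\<exists>i\<in>I. 0 < c i \<and> b i \<noteq> a i"
  shows "(\<Sum>i\<in>I. c i * ln (b i)) < (\<Sum>i\<in>I. c i * ln (a i)) + (\<Sum>i\<in>I. c i * (b i / a i - 1))"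
proof -
  have "c i * ln (b i) \<le> c i * ln (a i) + c i * (b i / a i - 1)" if "i \<in> I" for i
    using that assms(2) ln_less_ln_plus_ratio[of "a i" "b i"]
    by (cases "b i = a i") (auto simp: distrib_left[symmetric] intro!: mult_left_mono)
  moreover have "\<exists>i\<in>I. c i * ln (b i) < c i * ln (a i) + c i * (b i / a i - 1)"
  proof -
    obtain i where i: "i \<in> I" "0 < c i" "b i \<noteq> a i" using assms(3) by blast
    then have "c i * ln (b i) < c i * (ln (a i) + (b i / a i - 1))"
      using assms(2) ln_less_ln_plus_ratio by simp
    then show ?thesis using i(1) by (auto simp: distrib_left)
  qed
  ultimately have "(\<Sum>i\<in>I. c i * ln (b i)) < (\<Sum>i\<in>I. c i * ln (a i) + c i * (b i / a i - 1))"
    by (intro sum_strict_mono_ex1[OF assms(1)]) auto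
  then show ?thesis by (simp add: sum.distrib)
qed

locale tree =
  fixes N :: nat and E :: "(nat \<times> nat) set"
  assumes rooted: "rooted_tree N E"
begin

lemma root_in_vset: "1 \<in> vset N"
  using rooted unfolding rooted_tree_def vset_def by auto

lemma edge_in_vset: "(a, b) \<in> E \<Longrightarrow> a \<in> vset N \<and> b \<in> vset N"
  using rooted unfolding rooted_tree_def by blast

lemma trancl_in_vset: "(a, b) \<in> E\<^sup>+ \<Longrightarrow> a \<in> vset N \<and> b \<in> vset N"
  by (induction rule: trancl_induct) (auto dest: edge_in_vset)

lemma no_edge_to_root: "(a, 1) \<notin> E"
  using rooted unfolding rooted_tree_def by blast

lemma reachable_from_root: "v \<in> vset N \<Longrightarrow> (1, v) \<in> E\<^sup>*"
  using rooted unfolding rooted_tree_def by blast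

lemma parent_unique:
  assumes "(a, v) \<in> E" "(b, v) \<in> E"
  shows "a = b"
proof -
  have "v \<in> vset N" "v \<noteq> 1"
    using assms edge_in_vset no_edge_to_root by auto
  then have "\<exists>!u. (u, v) \<in> E"
    using rooted unfolding rooted_tree_def by blast
  then show ?thesis using assms by blast
qed

lemma trancl_irrefl: "(v, v) \<notin> E\<^sup>+"
proof
  assume cycle: "(v, v) \<in> E\<^sup>+"
  then have "(1, v) \<in> E\<^sup>*" using trancl_in_vset reachable_from_root by blast
  then show False using cycle
  proof (induction arbitrary: rule: rtrancl_induct)
    case base
    then obtain u where "(u, 1) \<in> E" by (meson tranclE)
    then show ?case using no_edge_to_root by blast
  next
    case (step u v)
    then obtain x where x: "(v, x) \<in> E\<^sup>*" "(x, v) \<in> E" by (meson tranclD2)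
    then have "x = u" using parent_unique step.hyps(2) by blast
    then have "(u, u) \<in> E\<^sup>+" using x step.hyps(2) by (meson rtrancl_into_trancl2)
    then show ?case using step.IH by blast
  qed
qed

lemma anc_comparable:
  "(b, v) \<in> E\<^sup>* \<Longrightarrow> (a, v) \<in> E\<^sup>* \<Longrightarrow> (a, b) \<in> E\<^sup>* \<or> (b, a) \<in> E\<^sup>*"
proof (induction rule: rtrancl_induct)
  case base
  then show ?case by blast
next
  case (step x v)
  show ?case
  proof (cases "a = v")
    case True
    then show ?thesis using step by (meson rtrancl.rtrancl_into_rtrancl)
  next
    case False
    then have "(a, v) \<in> E\<^sup>+" using step.prems by (meson rtranclD)
    then obtain y where y: "(a, y) \<in> E\<^sup>*" "(y, v) \<in> E" by (meson tranclD2)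
    then have "y = x" using parent_unique step.hyps(2) by blast
    then show ?thesis using step.IH y by blast
  qed
qed

lemma sibling_not_rtrancl:
  assumes "(u, c) \<in> E" "(u, c') \<in> E" "c \<noteq> c'"
  shows "(c, c') \<notin> E\<^sup>*"
proof
  assume "(c, c') \<in> E\<^sup>*"
  then have "(c, c') \<in> E\<^sup>+" using assms(3) by (meson rtranclD)
  then obtain y where y: "(c, y) \<in> E\<^sup>*" "(y, c') \<in> E" by (meson tranclD2)
  then have "y = u" using parent_unique assms(2) by blast
  then have "(u, u) \<in> E\<^sup>+" using y assms(1) by (meson rtrancl_into_trancl2)
  then show False using trancl_irrefl by blast
qed

lemma sibling_subtrees_disjoint:
  assumes "(u, c) \<in> E" "(u, c') \<in> E" "c \<noteq> c'"
  shows "insert c (desc E c) \<inter> insert c' (desc E c') = {}"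
proof -
  have "(c, x) \<notin> E\<^sup>* \<or> (c', x) \<notin> E\<^sup>*" for x
    using anc_comparable sibling_not_rtrancl assms by metis
  then show ?thesis unfolding desc_def by (auto dest: trancl_into_rtrancl)
qed

lemma desc_eq_UN_children: "desc E u = (\<Union>c\<in>{c. (u, c) \<in> E}. insert c (desc E c))"
  unfolding desc_def
  by (auto intro: rtrancl_into_trancl2) (metis rtranclD tranclD)

lemma anc_child: "(u, c) \<in> E \<Longrightarrow> anc E c = insert u (anc E u)"
  unfolding anc_def
  by (auto dest: tranclD2 intro: trancl_into_trancl)
    (metis parent_unique rtranclD tranclD2 trancl_into_trancl)

lemma anc_root: "anc E 1 = {}"
  unfolding anc_def using no_edge_to_root by (auto dest: tranclD2)

lemma not_in_anc: "v \<notin> anc E v"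
  unfolding anc_def using trancl_irrefl by blast

lemma not_in_desc: "v \<notin> desc E v"
  unfolding desc_def using trancl_irrefl by blast

lemma anc_subset: "anc E v \<subseteq> vset N"
  unfolding anc_def using trancl_in_vset by blast

lemma desc_subset: "desc E v \<subseteq> vset N"
  unfolding desc_def using trancl_in_vset by blast

lemma finite_anc: "finite (anc E v)"
  using anc_subset finite_vset finite_subset by blast

lemma finite_desc: "finite (desc E v)"
  using desc_subset finite_vset finite_subset by blast

lemma finite_children: "finite {c. (u, c) \<in> E}"
  using edge_in_vset finite_vset by (blast intro: finite_subset)

lemma card_desc_child_less: "(u, c) \<in> E \<Longrightarrow> card (desc E c) < card (desc E u)"
  using not_in_desc[of c] finite_desc
  by (intro psubset_card_mono) (auto simp: desc_def intro: trancl_into_trancl2)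

lemma vset_eq_root_subtree: "vset N = insert 1 (desc E 1)"
proof -
  have "v \<in> desc E 1" if "v \<in> vset N" "v \<noteq> 1" for v
    using reachable_from_root[OF that(1)] that(2) unfolding desc_def by (auto dest: rtranclD)
  then show ?thesis using root_in_vset desc_subset by blast
qed

lemma sum_desc_children:
  "(\<Sum>v\<in>desc E u. f v) = (\<Sum>c\<in>{c. (u, c) \<in> E}. \<Sum>v\<in>insert c (desc E c). f v)"
  unfolding desc_eq_UN_children[of u]
  using finite_children finite_desc sibling_subtrees_disjoint
  by (intro sum.UNION_disjoint) auto

end

definition (in tree) top_indicator :: "nat set \<Rightarrow> nat \<Rightarrow> real" where
  "top_indicator C v = (if v \<in> C \<and> anc E v \<inter> C = {} then 1 else 0)"

lemma (in tree) top_indicator_in_Zset: "C \<subseteq> vset N \<Longrightarrow> top_indicator C \<in> Zset N E"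
  unfolding Zset_def top_indicator_def by auto

locale weighted_tree = tree +
  fixes w :: "nat \<Rightarrow> real"
  assumes weight_pos: "v \<in> vset N \<Longrightarrow> 0 < w v"
begin

definition subtree_weight :: "nat \<Rightarrow> real" where
  "subtree_weight v = (\<Sum>v'\<in>insert v (desc E v). w v')"

definition kappa :: "nat \<Rightarrow> real" where
  "kappa v = w v / subtree_weight v"

definition unselected_above :: "nat \<Rightarrow> real" where
  "unselected_above v = (\<Prod>a\<in>anc E v. 1 - kappa a)"

definition gamma_opt :: "nat \<Rightarrow> real" where
  "gamma_opt v = (if v \<in> vset N then kappa v * unselected_above v else 0)"

definition dual_weight :: "nat \<Rightarrow> real" where
  "dual_weight v = subtree_weight v / unselected_above v"

lemma subtree_weight_eq: "subtree_weight v = w v + (\<Sum>v'\<in>desc E v. w v')"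
  unfolding subtree_weight_def using finite_desc not_in_desc by simp

lemma weight_desc_nonneg: "x \<in> desc E v \<Longrightarrow> 0 \<le> w x"
  using desc_subset weight_pos by (meson less_imp_le subsetD)

lemma sum_desc_weight_nonneg: "0 \<le> (\<Sum>v'\<in>desc E v. w v')"
  using weight_desc_nonneg by (intro sum_nonneg)

lemma sum_desc_weight_pos: "x \<in> desc E v \<Longrightarrow> 0 < (\<Sum>v'\<in>desc E v. w v')"
  using desc_subset weight_pos finite_desc weight_desc_nonneg
  by (intro sum_pos2[of _ x]) auto

lemma subtree_weight_pos: "v \<in> vset N \<Longrightarrow> 0 < subtree_weight v"
  using subtree_weight_eq weight_pos sum_desc_weight_nonneg by (simp add: add_pos_nonneg)

lemma kappa_pos: "v \<in> vset N \<Longrightarrow> 0 < kappa v"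
  unfolding kappa_def using subtree_weight_pos weight_pos by simp

lemma kappa_le_1: "v \<in> vset N \<Longrightarrow> kappa v \<le> 1"
  unfolding kappa_def using subtree_weight_pos subtree_weight_eq sum_desc_weight_nonneg by simp

lemma one_minus_kappa: "v \<in> vset N \<Longrightarrow> 1 - kappa v = (\<Sum>v'\<in>desc E v. w v') / subtree_weight v"
  unfolding kappa_def using subtree_weight_pos[of v] subtree_weight_eq[of v]
  by (simp add: field_simps)

lemma kappa_anc_less_1: "a \<in> anc E v \<Longrightarrow> kappa a < 1"
proof -
  assume a: "a \<in> anc E v"
  then have "a \<in> vset N" "v \<in> desc E a"
    using anc_subset unfolding anc_def desc_def by auto
  then have "0 < 1 - kappa a"
    using one_minus_kappa sum_desc_weight_pos subtree_weight_pos by simp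
  then show ?thesis by simp
qed

lemma unselected_above_pos: "0 < unselected_above v"
  unfolding unselected_above_def using kappa_anc_less_1 by (intro prod_pos) auto

lemma unselected_above_child: "(u, c) \<in> E \<Longrightarrow> unselected_above c = (1 - kappa u) * unselected_above u"
  unfolding unselected_above_def using anc_child not_in_anc finite_anc by simp

lemma gamma_opt_pos: "v \<in> vset N \<Longrightarrow> 0 < gamma_opt v"
  unfolding gamma_opt_def using kappa_pos unselected_above_pos by simp

lemma weight_div_gamma_opt: "v \<in> vset N \<Longrightarrow> w v / gamma_opt v = dual_weight v"
  unfolding gamma_opt_def dual_weight_def kappa_def
  using weight_pos[of v] subtree_weight_pos[of v] unselected_above_pos[of v] by simp

lemma sum_children_dual_weight_le:
  assumes u: "u \<in> vset N"
  shows "(\<Sum>c\<in>{c. (u, c) \<in> E}. dual_weight c) \<le> dual_weight u"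
proof (cases "{c. (u, c) \<in> E} = {}")
  case True
  then show ?thesis
    unfolding dual_weight_def using subtree_weight_pos[OF u] unselected_above_pos[of u] by simp
next
  case False
  then obtain c0 where "(u, c0) \<in> E" by blast
  then have desc_pos: "0 < (\<Sum>v\<in>desc E u. w v)"
    by (intro sum_desc_weight_pos[of c0]) (simp add: desc_def)
  have children: "(\<Sum>c\<in>{c. (u, c) \<in> E}. subtree_weight c) = (\<Sum>v\<in>desc E u. w v)"
    unfolding subtree_weight_def by (rule sum_desc_children[symmetric])
  have "(\<Sum>c\<in>{c. (u, c) \<in> E}. dual_weight c)
      = (\<Sum>c\<in>{c. (u, c) \<in> E}. subtree_weight c) / ((1 - kappa u) * unselected_above u)"
    unfolding dual_weight_def by (simp add: unselected_above_child sum_divide_distrib)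
  also have "\<dots> = dual_weight u"
    unfolding children one_minus_kappa[OF u] dual_weight_def
    using desc_pos subtree_weight_pos[OF u] unselected_above_pos[of u] by (simp add: field_simps)
  finally show ?thesis by simp
qed

lemma Zset_subtree_dual_weight_le:
  assumes z: "z \<in> Zset N E"
  shows "u \<in> vset N \<Longrightarrow> (\<Sum>v\<in>insert u (desc E u). z v * dual_weight v) \<le> dual_weight u"
proof (induction u rule: measure_induct_rule[of "\<lambda>u. card (desc E u)"])
  case (less u)
  have split: "(\<Sum>v\<in>insert u (desc E u). z v * dual_weight v)
      = z u * dual_weight u + (\<Sum>v\<in>desc E u. z v * dual_weight v)"
    using finite_desc not_in_desc by simp
  consider "z u = 1" | "z u = 0" using z less.prems unfolding Zset_def by blast
  then show ?case
  proof cases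
    case 1
    have "z v = 0" if "v \<in> desc E u" for v
      using z 1 that desc_subset unfolding Zset_def anc_def desc_def by fastforce
    then show ?thesis using split 1 by simp
  next
    case 2
    have "(\<Sum>v\<in>insert u (desc E u). z v * dual_weight v)
        = (\<Sum>c\<in>{c. (u, c) \<in> E}. \<Sum>v\<in>insert c (desc E c). z v * dual_weight v)"
      unfolding split 2 by (simp add: sum_desc_children)
    also have "\<dots> \<le> (\<Sum>c\<in>{c. (u, c) \<in> E}. dual_weight c)"
      using less.IH card_desc_child_less edge_in_vset by (intro sum_mono) auto
    also have "\<dots> \<le> dual_weight u"
      using sum_children_dual_weight_le[OF less.prems] .
    finally show ?thesis .
  qed
qed

lemma dual_weight_root: "dual_weight 1 = (\<Sum>v\<in>vset N. w v)"
  unfolding dual_weight_def unselected_above_def subtree_weight_def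
  using anc_root vset_eq_root_subtree by simp

lemma conv_fin_dual_weight_le:
  assumes "\<gamma> \<in> conv_fin (Zset N E)"
  shows "(\<Sum>v\<in>vset N. \<gamma> v * dual_weight v) \<le> (\<Sum>v\<in>vset N. w v)"
proof (rule conv_fin_sum_le[OF assms])
  fix z assume "z \<in> Zset N E"
  then show "(\<Sum>v\<in>vset N. z v * dual_weight v) \<le> (\<Sum>v\<in>vset N. w v)"
    using Zset_subtree_dual_weight_le[OF _ root_in_vset] dual_weight_root
    unfolding vset_eq_root_subtree[symmetric] by simp
qed

theorem gamma_opt_log_optimal:
  assumes \<gamma>: "\<gamma> \<in> conv_fin (Zset N E)" and pos: "\<forall>v\<in>vset N. 0 < \<gamma> v"
    and ne: "\<gamma> \<noteq> gamma_opt"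
  shows "(\<Sum>v\<in>vset N. w v * ln (\<gamma> v)) < (\<Sum>v\<in>vset N. w v * ln (gamma_opt v))"
proof -
  obtain v where "\<gamma> v \<noteq> gamma_opt v" using ne by blast
  moreover have "\<gamma> v = gamma_opt v" if "v \<notin> vset N" for v
    using that conv_fin_eq_0[OF \<gamma>] Zset_outside unfolding gamma_opt_def by simp
  ultimately have "\<exists>v\<in>vset N. 0 < w v \<and> \<gamma> v \<noteq> gamma_opt v"
    using weight_pos by blast
  moreover have "\<forall>v\<in>vset N. 0 \<le> w v \<and> 0 < gamma_opt v \<and> 0 < \<gamma> v"
    using pos weight_pos gamma_opt_pos less_imp_le by blast
  ultimately have "(\<Sum>v\<in>vset N. w v * ln (\<gamma> v))
      < (\<Sum>v\<in>vset N. w v * ln (gamma_opt v)) + (\<Sum>v\<in>vset N. w v * (\<gamma> v / gamma_opt v - 1))"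
    using weighted_sum_ln_less[OF finite_vset] by blast
  also have "(\<Sum>v\<in>vset N. w v * (\<gamma> v / gamma_opt v - 1))
      = (\<Sum>v\<in>vset N. \<gamma> v * dual_weight v - w v)"
    by (intro sum.cong) (simp_all flip: weight_div_gamma_opt add: algebra_simps)
  also have "\<dots> = (\<Sum>v\<in>vset N. \<gamma> v * dual_weight v) - (\<Sum>v\<in>vset N. w v)"
    by (rule sum_subtractf)
  also have "\<dots> \<le> 0"
    using conv_fin_dual_weight_le[OF \<gamma>] by simp
  finally show ?thesis by simp
qed

definition selection_prob :: "nat set \<Rightarrow> real" where
  "selection_prob C = (\<Prod>u\<in>C. kappa u) * (\<Prod>u\<in>vset N - C. 1 - kappa u)"

lemma selection_prob_nonneg: "C \<subseteq> vset N \<Longrightarrow> 0 \<le> selection_prob C"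
  unfolding selection_prob_def using kappa_pos kappa_le_1
  by (intro mult_nonneg_nonneg prod_nonneg) (auto simp: less_imp_le)

lemma sum_selection_prob: "(\<Sum>C\<in>Pow (vset N). selection_prob C) = 1"
  using prod_add[OF finite_vset, of kappa "\<lambda>u. 1 - kappa u"]
  unfolding selection_prob_def by simp

lemma sum_selection_prob_top_indicator:
  assumes v: "v \<in> vset N"
  shows "(\<Sum>C\<in>Pow (vset N). selection_prob C * top_indicator C v) = gamma_opt v"
proof -
  define f where "f u = (if u \<in> anc E v then 0 else kappa u)" for u
  define g where "g u = (if u = v then 0 else 1 - kappa u)" for u
  have summand: "(\<Prod>u\<in>C. f u) * (\<Prod>u\<in>vset N - C. g u) = selection_prob C * top_indicator C v"
    if C: "C \<subseteq> vset N" for C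
  proof (cases "v \<in> C \<and> anc E v \<inter> C = {}")
    case True
    then show ?thesis
      unfolding selection_prob_def top_indicator_def f_def g_def
      by (auto intro!: arg_cong2[where f = "(*)"] prod.cong)
  next
    case False
    have "finite C" using C finite_vset finite_subset by blast
    have "(\<Prod>u\<in>C. f u) = 0 \<or> (\<Prod>u\<in>vset N - C. g u) = 0"
    proof (cases "v \<in> C")
      case True
      then obtain a where "a \<in> C" "a \<in> anc E v" using False by blast
      then have "(\<Prod>u\<in>C. f u) = 0"
        using \<open>finite C\<close> by (intro prod_zero) (auto simp: f_def)
      then show ?thesis ..
    next
      case False
      then have "(\<Prod>u\<in>vset N - C. g u) = 0"
        using v finite_vset by (intro prod_zero) (auto simp: g_def)
      then show ?thesis ..
    qed
    then show ?thesis using False unfolding top_indicator_def by auto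
  qed
  have "(\<Sum>C\<in>Pow (vset N). selection_prob C * top_indicator C v) = (\<Prod>u\<in>vset N. f u + g u)"
    unfolding prod_add[OF finite_vset] using summand by (intro sum.cong) auto
  also have "\<dots> = (\<Prod>u\<in>insert v (anc E v). f u + g u)"
    using v anc_subset not_in_anc
    by (intro prod.mono_neutral_right[OF finite_vset]) (auto simp: f_def g_def)
  also have "\<dots> = kappa v * unselected_above v"
    unfolding unselected_above_def using finite_anc not_in_anc
    by (auto simp: f_def g_def intro!: prod.cong)
  finally show ?thesis unfolding gamma_opt_def using v by simp
qed

lemma gamma_opt_in_conv_fin: "gamma_opt \<in> conv_fin (Zset N E)"
proof -
  have "gamma_opt = (\<lambda>v. \<Sum>C\<in>Pow (vset N). selection_prob C * top_indicator C v)"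
  proof
    fix v show "gamma_opt v = (\<Sum>C\<in>Pow (vset N). selection_prob C * top_indicator C v)"
      using sum_selection_prob_top_indicator[of v]
      by (cases "v \<in> vset N") (auto simp: gamma_opt_def top_indicator_def intro!: sum.neutral)
  qed
  also have "\<dots> \<in> conv_fin (Zset N E)"
    using finite_vset finite_Zset top_indicator_in_Zset selection_prob_nonneg sum_selection_prob
    by (intro mixture_in_conv_fin) auto
  finally show ?thesis .
qed

end

lemma nflows_beam_pos: "finite K \<Longrightarrow> k \<in> K \<Longrightarrow> 0 < nflows K beam (beam k)"
  unfolding nflows_def by (auto simp: card_gt_0_iff)

lemma sum_by_beam:
  assumes "finite K" "\<forall>k\<in>K. beam k \<in> vset N"
  shows "(\<Sum>k\<in>K. f k) = (\<Sum>v\<in>vset N. \<Sum>k\<in>{k \<in> K. beam k = v}. f k)"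
  by (rule sum.group[symmetric, OF assms(1) finite_vset]) (use assms(2) in auto)

lemma sum_by_beam_nflows:
  assumes "finite K" "\<forall>k\<in>K. beam k \<in> vset N"
  shows "(\<Sum>k\<in>K. f (beam k)) = (\<Sum>v\<in>vset N. real (nflows K beam v) * f v)"
  unfolding sum_by_beam[OF assms] nflows_def by simp

lemma delta_star_in_Delta:
  assumes "finite K" "\<forall>v\<in>vset N. 1 \<le> nflows K beam v"
  shows "delta_star K beam \<in> Delta N K beam"
proof -
  have "(\<Sum>k\<in>{k \<in> K. beam k = v}. delta_star K beam k) = 1" if "v \<in> vset N" for v
  proof -
    have "(\<Sum>k\<in>{k \<in> K. beam k = v}. delta_star K beam k) = nflows K beam v * (1 / nflows K beam v)"
      unfolding delta_star_def nflows_def by simp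
    then show ?thesis using assms(2) that by (simp add: Suc_le_eq)
  qed
  moreover have "0 \<le> delta_star K beam k \<and> delta_star K beam k \<le> 1" if "k \<in> K" for k
    using nflows_beam_pos[OF assms(1) that] unfolding delta_star_def by (simp add: Suc_le_eq)
  moreover have "delta_star K beam k = 0" if "k \<notin> K" for k
    using that unfolding delta_star_def by simp
  ultimately show ?thesis unfolding Delta_def by blast
qed

theorem delta_star_log_optimal:
  assumes K: "finite K" "\<forall>k\<in>K. beam k \<in> vset N"
    and \<delta>: "\<delta> \<in> Delta N K beam" and pos: "\<forall>k\<in>K. 0 < \<delta> k" and ne: "\<delta> \<noteq> delta_star K beam"
  shows "(\<Sum>k\<in>K. ln (\<delta> k)) < (\<Sum>k\<in>K. ln (delta_star K beam k))"
proof -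
  let ?n = "\<lambda>k. real (nflows K beam (beam k))"
  have star: "delta_star K beam k = 1 / ?n k" if "k \<in> K" for k
    using that unfolding delta_star_def by simp
  obtain k where "\<delta> k \<noteq> delta_star K beam k" using ne by blast
  then have "\<exists>k\<in>K. 0 < (1::real) \<and> \<delta> k \<noteq> delta_star K beam k"
    using \<delta> unfolding Delta_def delta_star_def by (cases "k \<in> K") auto
  moreover have "\<forall>k\<in>K. 0 \<le> (1::real) \<and> 0 < delta_star K beam k \<and> 0 < \<delta> k"
    using pos star nflows_beam_pos[OF K(1)] by simp
  ultimately have "(\<Sum>k\<in>K. ln (\<delta> k))
      < (\<Sum>k\<in>K. ln (delta_star K beam k)) + (\<Sum>k\<in>K. \<delta> k / delta_star K beam k - 1)"
    using weighted_sum_ln_less[OF K(1), of "\<lambda>_. 1"] by simp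
  also have "(\<Sum>k\<in>K. \<delta> k / delta_star K beam k - 1) = (\<Sum>k\<in>K. \<delta> k * ?n k - 1)"
    using star by simp
  also have "\<dots> = (\<Sum>v\<in>vset N. \<Sum>k\<in>{k \<in> K. beam k = v}. \<delta> k * real (nflows K beam v) - 1)"
    unfolding sum_by_beam[OF K] by (intro sum.cong) auto
  also have "\<dots> = (\<Sum>v\<in>vset N. (\<Sum>k\<in>{k \<in> K. beam k = v}. \<delta> k) * real (nflows K beam v)
      - real (nflows K beam v))"
    by (simp add: sum_subtractf sum_distrib_right nflows_def)
  also have "\<dots> = 0"
    using \<delta> unfolding Delta_def by simp
  finally show ?thesis by simp
qed

lemma objective_eq_sum_ln:
  assumes K: "finite K" "\<forall>k\<in>K. beam k \<in> vset N"
    and pos: "\<forall>k\<in>K. 0 < r k \<and> 0 < \<gamma> (beam k) \<and> 0 < \<delta> k"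
  shows "objective K beam r \<gamma> \<delta> = ereal ((\<Sum>k\<in>K. ln (r k))
    + (\<Sum>v\<in>vset N. real (nflows K beam v) * ln (\<gamma> v)) + (\<Sum>k\<in>K. ln (\<delta> k)))"
proof -
  have "(\<Sum>k\<in>K. ln (r k * \<gamma> (beam k) * \<delta> k))
      = (\<Sum>k\<in>K. ln (r k)) + (\<Sum>k\<in>K. ln (\<gamma> (beam k))) + (\<Sum>k\<in>K. ln (\<delta> k))"
    using pos by (simp add: ln_mult_pos sum.distrib)
  then show ?thesis
    unfolding objective_def using pos sum_by_beam_nflows[OF K, of "\<lambda>v. ln (\<gamma> v)"] by simp
qed

lemma flow_factors_pos:
  assumes \<gamma>: "\<gamma> \<in> conv_fin (Zset N E)" and \<delta>: "\<delta> \<in> Delta N K beam"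
    and rpos: "\<forall>k\<in>K. 0 < r k" and prod_pos: "\<forall>k\<in>K. 0 < r k * \<gamma> (beam k) * \<delta> k"
  shows "\<forall>k\<in>K. 0 < \<gamma> (beam k) \<and> 0 < \<delta> k"
proof
  fix k assume k: "k \<in> K"
  have "0 \<le> \<gamma> (beam k)" "0 \<le> \<delta> k"
    using conv_fin_nonneg[OF \<gamma>] Zset_nonneg \<delta> k unfolding Delta_def by auto
  moreover have "0 < \<gamma> (beam k) * \<delta> k"
    using prod_pos rpos k by (metis mult.assoc zero_less_mult_pos)
  ultimately show "0 < \<gamma> (beam k) \<and> 0 < \<delta> k"
    by (simp add: zero_less_mult_iff)
qed

locale flow_system = tree +
  fixes K :: "'k set" and beam :: "'k \<Rightarrow> nat" and r :: "'k \<Rightarrow> real"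
  assumes finite_flows: "finite K"
    and rate_pos: "\<forall>k\<in>K. 0 < r k"
    and beam_in_vset: "\<forall>k\<in>K. beam k \<in> vset N"
    and beam_used: "\<forall>v\<in>vset N. 1 \<le> nflows K beam v"
begin

sublocale weighted_tree N E "\<lambda>v. real (nflows K beam v)"
  using beam_used by unfold_locales (auto simp: Suc_le_eq)

lemma gamma_star_eq_gamma_opt: "gamma_star N E K beam = gamma_opt"
  unfolding gamma_star_def gamma_opt_def unselected_above_def kappa_star_def kappa_def
    subtree_weight_def by simp

lemma objective_at_optimum:
  "objective K beam r gamma_opt (delta_star K beam) = ereal ((\<Sum>k\<in>K. ln (r k))
    + (\<Sum>v\<in>vset N. real (nflows K beam v) * ln (gamma_opt v)) + (\<Sum>k\<in>K. ln (delta_star K beam k)))"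
  using rate_pos beam_in_vset gamma_opt_pos nflows_beam_pos[OF finite_flows]
  by (intro objective_eq_sum_ln[OF finite_flows beam_in_vset]) (simp add: delta_star_def)

theorem objective_less_at_optimum:
  assumes \<gamma>: "\<gamma> \<in> conv_fin (Zset N E)" and \<delta>: "\<delta> \<in> Delta N K beam"
    and ne: "(\<gamma>, \<delta>) \<noteq> (gamma_opt, delta_star K beam)"
  shows "objective K beam r \<gamma> \<delta> < objective K beam r gamma_opt (delta_star K beam)"
proof (cases "\<forall>k\<in>K. 0 < r k * \<gamma> (beam k) * \<delta> k")
  case False
  then have "objective K beam r \<gamma> \<delta> = -\<infinity>"
    unfolding objective_def by simp
  then show ?thesis unfolding objective_at_optimum by simp
next
  case True
  then have pos: "\<forall>k\<in>K. 0 < \<gamma> (beam k) \<and> 0 < \<delta> k"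
    using flow_factors_pos[OF \<gamma> \<delta> rate_pos] by blast
  have "\<forall>v\<in>vset N. 0 < \<gamma> v"
    using pos beam_used unfolding nflows_def by (fastforce simp: Suc_le_eq card_gt_0_iff)
  then have "(\<Sum>v\<in>vset N. real (nflows K beam v) * ln (\<gamma> v))
      \<le> (\<Sum>v\<in>vset N. real (nflows K beam v) * ln (gamma_opt v))"
    and "\<gamma> \<noteq> gamma_opt \<Longrightarrow> (\<Sum>v\<in>vset N. real (nflows K beam v) * ln (\<gamma> v))
      < (\<Sum>v\<in>vset N. real (nflows K beam v) * ln (gamma_opt v))"
    using gamma_opt_log_optimal[OF \<gamma>] by (cases "\<gamma> = gamma_opt"; force)+
  moreover have "(\<Sum>k\<in>K. ln (\<delta> k)) \<le> (\<Sum>k\<in>K. ln (delta_star K beam k))"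
    and "\<delta> \<noteq> delta_star K beam \<Longrightarrow> (\<Sum>k\<in>K. ln (\<delta> k)) < (\<Sum>k\<in>K. ln (delta_star K beam k))"
    using delta_star_log_optimal[OF finite_flows beam_in_vset \<delta>] pos
    by (cases "\<delta> = delta_star K beam"; force)+
  ultimately show ?thesis
    using ne pos rate_pos
    by (auto simp: objective_at_optimum objective_eq_sum_ln[OF finite_flows beam_in_vset])
qed

end

theorem mainTheorem3:
  fixes N :: nat and E :: "(nat \<times> nat) set"
    and K :: "'k set" and beam :: "'k \<Rightarrow> nat" and r :: "'k \<Rightarrow> real"
  assumes tree: "rooted_tree N E"
    and finK: "finite K"
    and rpos: "\<forall>k\<in>K. r k > 0"
    and beamV: "\<forall>k\<in>K. beam k \<in> vset N"
    and nonempty: "\<forall>v\<in>vset N. nflows K beam v \<ge> 1"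
  shows "gamma_star N E K beam \<in> conv_fin (Zset N E)
       \<and> delta_star K beam \<in> Delta N K beam
       \<and> (\<forall>\<gamma> \<delta>. \<gamma> \<in> conv_fin (Zset N E) \<and> \<delta> \<in> Delta N K beam
            \<and> (\<gamma>, \<delta>) \<noteq> (gamma_star N E K beam, delta_star K beam)
            \<longrightarrow> objective K beam r \<gamma> \<delta> < objective K beam r (gamma_star N E K beam) (delta_star K beam))"
proof -
  interpret flow_system N E K beam r
    using tree finK rpos beamV nonempty by unfold_locales auto
  show ?thesis
    unfolding gamma_star_eq_gamma_opt
    using gamma_opt_in_conv_fin delta_star_in_Delta[OF finK nonempty] objective_less_at_optimum
    by blast
qed

end
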